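(* Let $p$ be a prime with $p\equiv 1\pmod 3$. Then, for every integer $x$, $$(x^2+x+1)^{p-2}\equiv 1+\frac23x^{p-1}-\frac13x^{p-2}+\sum_{k=2}^{p-2}\left(k\left(\frac k3\right)+[3\mid k-1]-\frac13\right)x^{k-1}\pmod p,$$ equivalently the two sides agree in $\mathbb F_p[x]$ modulo $x^p-x$.
   Context: Here $\left(\frac{k}{3}\right)$ is the Legendre symbol modulo $3$ (equal to $0,1,-1$ according as $k\equiv 0,1,2\pmod 3$). For an assertion $A$, $[A]=1$ if $A$ holds and $[A]=0$ otherwise. The rational numbers $\frac13,\frac23$ are interpreted as elements of $\mathbb Z/p\mathbb Z$ (as $p\neq 3$), i.e., the congruence is in the ring of rationals with denominator prime to $p$. *)

theory Defs
  imports "HOL-Number_Theory.Number_Theory"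
begin

end

theory Submission
  imports Defs
begin

text \<open>Write p = 3n + 4 and f = x^2 + x + 1. Multiplying by 3 and replacing t by 1/3, the
  claim becomes 3 f^(p-2) = W(x) mod p for an explicit integer polynomial W. The coefficients of W
  are 3-periodic up to a linear drift, so (x^3 - 1)^2 W has a closed form, and it shows that
  x (x - 1) (x^3 - 1) (W f - 3) vanishes mod p as soon as x^(p-1) = 1 mod p. Hence
  W = 3/f = 3 f^(p-2) whenever x (x^3 - 1) is a unit mod p. The remaining residues are checked
  directly: W = 3 at x = 0, and W = -(n + 1) f = f/3 when x^3 = 1, which agrees with 3 f^(p-2)
  both for f = 0 and for x = 1.\<close>

text \<open>coeff3 k is three times the coefficient of x^(k-1) in the statement with t = 1/3, and
  rhs3 n x is three times the whole right-hand side for p = 3n + 4.\<close>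

definition coeff3 :: "nat \<Rightarrow> int" where
  "coeff3 k = 3 * (int k * Legendre (int k) 3 + of_bool (3 dvd (int k - 1))) - 1"

definition coeff_sum3 :: "nat \<Rightarrow> int \<Rightarrow> int" where
  "coeff_sum3 n x = (\<Sum>k = 2..3 * n + 2. coeff3 k * x ^ (k - 1))"

definition rhs3 :: "nat \<Rightarrow> int \<Rightarrow> int" where
  "rhs3 n x = 3 + 2 * x ^ (3 * n + 3) - x ^ (3 * n + 2) + coeff_sum3 n x"

lemma Legendre_3:
  "Legendre a 3 = (if a mod 3 = 0 then 0 else if a mod 3 = 1 then 1 else -1)"
proof -
  have "QuadRes 3 a \<longleftrightarrow> a mod 3 \<noteq> 2"
  proof
    assume "QuadRes 3 a"
    then obtain y :: int where "y^2 mod 3 = a mod 3"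
      unfolding QuadRes_def cong_def by blast
    then have "(y mod 3)^2 mod 3 = a mod 3" by (simp add: power_mod)
    moreover have "y mod 3 = 0 \<or> y mod 3 = 1 \<or> y mod 3 = 2" by arith
    ultimately show "a mod 3 \<noteq> 2" by auto
  next
    assume "a mod 3 \<noteq> 2"
    then have "a mod 3 = 0 \<or> a mod 3 = 1" by arith
    then show "QuadRes 3 a"
      unfolding QuadRes_def cong_def by (metis mod_mod_trivial one_power2 zero_power2)
  qed
  then show ?thesis by (auto simp: Legendre_def cong_def)
qed

lemma coeff3_eq:
  "coeff3 k = (if k mod 3 = 0 then -1 else if k mod 3 = 1 then 3 * int k + 2 else - 3 * int k - 1)"
proof -
  have "int k mod 3 = int (k mod 3)" by (simp add: zmod_int)
  moreover have "3 dvd (int k - 1) \<longleftrightarrow> k mod 3 = 1" by presburger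
  ultimately show ?thesis unfolding coeff3_def Legendre_3 by (auto simp: cong_def)
qed

lemma coeff_sum3_0: "coeff_sum3 0 x = - 7 * x"
  by (simp add: coeff_sum3_def coeff3_eq)

lemma coeff_sum3_Suc:
  "coeff_sum3 (Suc n) x = coeff_sum3 n x - x ^ (3 * n + 2)
     + (9 * int n + 14) * x ^ (3 * n + 3) - (9 * int n + 16) * x ^ (3 * n + 4)"
proof -
  have "{2..3 * Suc n + 2} = insert (3 * n + 5) (insert (3 * n + 4) (insert (3 * n + 3) {2..3 * n + 2}))"
    by auto
  then show ?thesis
    by (simp add: coeff_sum3_def coeff3_eq algebra_simps)
qed

lemma coeff_sum3_closed_form:
  "coeff_sum3 n x * (x^3 - 1)^2 = - 7*x - x^2 + 14*x^3 - 2*x^4 + x^5 - 5*x^6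
     + x ^ (3 * n + 2) * (1 - (9 * int n + 14) * x + (9 * int n + 16) * x^2 - x^3
                           + (9 * int n + 5) * x^4 - (9 * int n + 7) * x^5)"
proof (induction n)
  case 0
  show ?case by (simp add: coeff_sum3_0 algebra_simps power2_eq_square power3_eq_cube eval_nat_numeral)
next
  case (Suc n)
  have powers: "x ^ (3 * n + 3) = x ^ (3 * n + 2) * x" "x ^ (3 * n + 4) = x ^ (3 * n + 2) * x^2"
    "x ^ (3 * Suc n + 2) = x ^ (3 * n + 2) * x^3"
    by (simp_all add: power_add eval_nat_numeral algebra_simps)
  show ?case
    unfolding coeff_sum3_Suc powers left_diff_distrib distrib_right Suc.IH
    by (simp add: algebra_simps power2_eq_square power3_eq_cube eval_nat_numeral)
qed

lemma cube_root_of_unity_pow_cong: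
  fixes x :: int
  assumes "[x^3 = 1] (mod q)"
  shows "[x ^ (3 * n + 2) = x^2] (mod q)" "[x ^ (3 * n + 3) = 1] (mod q)"
    "[x ^ (3 * n + 4) = x] (mod q)"
proof -
  have "[x ^ (3 * m + r) = x ^ r] (mod q)" for m r
    using cong_mult[OF cong_pow[OF assms, of m] cong_refl[of "x ^ r"]]
    by (simp add: power_add power_mult)
  from this[of n 2] this[of "Suc n" 0] this[of "Suc n" 1]
  show "[x ^ (3 * n + 2) = x^2] (mod q)" "[x ^ (3 * n + 3) = 1] (mod q)"
    "[x ^ (3 * n + 4) = x] (mod q)"
    by (simp_all add: add.commute)
qed

lemma coeff_sum3_cube_root_cong:
  assumes "[x^3 = 1] (mod q)"
  shows "[2 * coeff_sum3 n x = 9 * int n * (int n + 1) + 10 * int n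
            - (9 * int n * (int n + 1) + 14 * (int n + 1)) * x - 2 * int n * x^2] (mod q)"
proof (induction n)
  case 0
  show ?case by (simp add: coeff_sum3_0)
next
  case (Suc n)
  have "[2 * coeff_sum3 n x - 2 * x ^ (3 * n + 2)
           + 2 * (9 * int n + 14) * x ^ (3 * n + 3) - 2 * (9 * int n + 16) * x ^ (3 * n + 4)
       = (9 * int n * (int n + 1) + 10 * int n
            - (9 * int n * (int n + 1) + 14 * (int n + 1)) * x - 2 * int n * x^2)
           - 2 * x^2 + 2 * (9 * int n + 14) * 1 - 2 * (9 * int n + 16) * x] (mod q)"
    using Suc.IH cube_root_of_unity_pow_cong[OF assms, of n]
    by (intro cong_add cong_diff cong_mult cong_refl) simp_all
  then show ?case
    by (simp add: coeff_sum3_Suc algebra_simps)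
qed

lemma rhs3_cube_root_cong:
  assumes "[x^3 = 1] (mod (3 * int n + 4))"
  shows "[2 * rhs3 n x = - 2 * (int n + 1) * (x^2 + x + 1)] (mod (3 * int n + 4))"
proof -
  have "2 * rhs3 n x = 6 + 4 * x ^ (3 * n + 3) - 2 * x ^ (3 * n + 2) + 2 * coeff_sum3 n x"
    by (simp add: rhs3_def)
  also have "[\<dots> = 6 + 4 * 1 - 2 * x^2 + (9 * int n * (int n + 1) + 10 * int n
            - (9 * int n * (int n + 1) + 14 * (int n + 1)) * x - 2 * int n * x^2)]
       (mod (3 * int n + 4))" (is "[_ = ?B] (mod _)")
    using coeff_sum3_cube_root_cong[OF assms] cube_root_of_unity_pow_cong[OF assms, of n]
    by (intro cong_add cong_diff cong_mult cong_refl) simp_all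
  finally have "[2 * rhs3 n x = ?B] (mod (3 * int n + 4))" .
  also have "?B = - 2 * (int n + 1) * (x^2 + x + 1) + (3 * int n + 4) * (3 * (int n + 1) * (1 - x))"
    by (simp add: algebra_simps power2_eq_square)
  finally show ?thesis
    by (rule cong_trans) (simp add: cong_iff_dvd_diff)
qed

lemma rhs3_mult_cong:
  assumes "[x ^ (3 * n + 3) = 1] (mod (3 * int n + 4))"
  shows "[x * (x - 1) * (x^3 - 1) * (rhs3 n x * (x^2 + x + 1)) = x * (x - 1) * (x^3 - 1) * 3]
           (mod (3 * int n + 4))"
proof -
  define z where "z = x ^ (3 * n + 2)"
  define D where "D = x^3 - 1"
  define C where "C = 1 - (9 * int n + 14) * x + (9 * int n + 16) * x^2 - x^3
                        + (9 * int n + 5) * x^4 - (9 * int n + 7) * x^5"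
  have xz: "x ^ (3 * n + 3) = x * z"
    by (simp add: z_def power_add eval_nat_numeral mult_ac)
  have "x * (x - 1) * D * (rhs3 n x * (x^2 + x + 1)) - x * (x - 1) * D * 3
      = x * (3 + 2 * x * z - z) * D^2 + x * (coeff_sum3 n x * D^2) - 3 * x * (x - 1) * D"
    unfolding rhs3_def xz z_def[symmetric] D_def
    by (simp add: algebra_simps power2_eq_square power3_eq_cube)
  also have "\<dots> = x * (3 + 2 * x * z - z) * D^2
      + x * (- 7*x - x^2 + 14*x^3 - 2*x^4 + x^5 - 5*x^6 + z * C) - 3 * x * (x - 1) * D"
    unfolding coeff_sum3_closed_form D_def C_def z_def ..
  also have "\<dots> = (x * z - 1) * (2 * x * D^2 - D^2 + C)
      + (3 * int n + 4) * (3 * x^2 - 3 * x + 3 * x^4 - 3 * x^5)"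
    unfolding D_def C_def by (simp add: algebra_simps power2_eq_square power3_eq_cube eval_nat_numeral)
  finally show ?thesis
    using assms unfolding xz D_def[symmetric] cong_iff_dvd_diff by simp
qed

lemma dvd_rhs3_minus_3: "x dvd rhs3 n x - 3"
proof -
  have "x dvd coeff_sum3 n x"
    unfolding coeff_sum3_def by (intro dvd_sum) (auto intro: dvd_mult dvd_power)
  then show ?thesis
    by (simp add: rhs3_def)
qed

lemma fermat_theorem_int:
  fixes p :: nat and a :: int
  assumes "prime p" and "\<not> int p dvd a"
  shows "[a ^ (p - 1) = 1] (mod int p)"
proof -
  interpret R: residues_prime p "residue_ring (int p)"
    by unfold_locales (rule assms(1))
  have "coprime a (int p)"
    using assms prime_imp_coprime[of "int p" a] by (simp add: ac_simps)
  then show ?thesis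
    using R.euler_theorem R.prime_totient_eq by simp
qed

lemma three_mult_pow_cong_rhs3_of_dvd:
  assumes "q dvd x"
  shows "[3 * (x^2 + x + 1) ^ k = rhs3 n x] (mod q)"
proof -
  have "[x^2 + x + 1 = 1] (mod q)"
    using assms by (simp add: cong_iff_dvd_diff power2_eq_square)
  then have "[3 * (x^2 + x + 1) ^ k = 3 * 1 ^ k] (mod q)"
    by (intro cong_mult cong_refl cong_pow)
  then have "[3 * (x^2 + x + 1) ^ k = 3] (mod q)"
    by simp
  moreover have "[3 = rhs3 n x] (mod q)"
    using dvd_trans[OF assms dvd_rhs3_minus_3] by (simp add: cong_iff_dvd_diff dvd_diff_commute)
  ultimately show ?thesis
    by (rule cong_trans)
qed

lemma three_mult_pow_cong_rhs3_of_cube_root: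
  assumes "prime p" and p: "p = 3 * n + 4" and cube: "[x^3 = 1] (mod int p)"
  shows "[3 * (x^2 + x + 1) ^ (3 * n + 2) = rhs3 n x] (mod int p)"
proof -
  let ?f = "x^2 + x + 1"
  have P: "int p = 3 * int n + 4" using p by simp
  have "x^3 - 1 = (x - 1) * ?f"
    by (simp add: algebra_simps power2_eq_square power3_eq_cube)
  then have "int p dvd (x - 1) * ?f"
    using cube by (simp add: cong_iff_dvd_diff)
  then consider "int p dvd x - 1" | "int p dvd ?f"
    using assms(1) by (auto simp: prime_dvd_mult_iff)
  then have lhs: "[2 * (3 * ?f ^ (3 * n + 2)) = - 2 * (int n + 1) * ?f] (mod int p)"
  proof cases
    case 1
    have "?f - 3 = (x - 1) * (x + 2)"
      by (simp add: algebra_simps power2_eq_square)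
    then have f3: "[?f = 3] (mod int p)"
      using 1 by (simp add: cong_iff_dvd_diff)
    have "\<not> int p dvd 3" using p by (auto dest: zdvd_imp_le)
    moreover have "p - 1 = Suc (3 * n + 2)" using p by simp
    ultimately have fermat: "[3 * 3 ^ (3 * n + 2) = 1] (mod int p)"
      using fermat_theorem_int[OF assms(1), of 3] by simp
    have "[2 * (3 * ?f ^ (3 * n + 2)) = 2 * (3 * 3 ^ (3 * n + 2))] (mod int p)"
      by (intro cong_mult cong_refl cong_pow f3)
    also have "[2 * (3 * 3 ^ (3 * n + 2)) = 2 * 1] (mod int p)"
      by (intro cong_mult cong_refl fermat)
    also have "[2 * 1 = - 2 * (int n + 1) * 3] (mod int p)"
    proof -
      have "2 * 1 - (- 2 * (int n + 1) * 3) = int p * 2"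
        using P by simp
      then show ?thesis
        unfolding cong_iff_dvd_diff by (simp only: dvd_triv_left)
    qed
    also have "[- 2 * (int n + 1) * 3 = - 2 * (int n + 1) * ?f] (mod int p)"
      using cong_sym[OF f3] by (intro cong_mult cong_refl)
    finally show ?thesis .
  next
    case 2
    then have f0: "[?f = 0] (mod int p)"
      by (simp add: cong_0_iff)
    have "[2 * (3 * ?f ^ (3 * n + 2)) = 2 * (3 * 0 ^ (3 * n + 2))] (mod int p)"
      by (intro cong_mult cong_refl cong_pow f0)
    then have "[2 * (3 * ?f ^ (3 * n + 2)) = 0] (mod int p)"
      by simp
    moreover have "[- 2 * (int n + 1) * ?f = - 2 * (int n + 1) * 0] (mod int p)"
      by (intro cong_mult cong_refl f0)
    then have "[0 = - 2 * (int n + 1) * ?f] (mod int p)"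
      by (simp add: cong_sym_eq)
    ultimately show ?thesis
      by (rule cong_trans)
  qed
  have rhs: "[2 * rhs3 n x = - 2 * (int n + 1) * ?f] (mod int p)"
    using rhs3_cube_root_cong[of x n] cube unfolding P by simp
  have "\<not> int p dvd 2" using p by (auto dest: zdvd_imp_le)
  then have "coprime 2 (int p)"
    using assms(1) prime_imp_coprime[of "int p" 2] by (simp add: coprime_commute)
  moreover have "[2 * (3 * ?f ^ (3 * n + 2)) = 2 * rhs3 n x] (mod int p)"
    using lhs rhs by (rule cong_trans[OF _ cong_sym])
  ultimately show ?thesis
    by (simp only: cong_mult_lcancel)
qed

lemma three_mult_pow_cong_rhs3_of_coprime:
  assumes "prime p" and p: "p = 3 * n + 4" and ndvd: "\<not> int p dvd x * (x - 1) * (x^3 - 1)"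
  shows "[3 * (x^2 + x + 1) ^ (3 * n + 2) = rhs3 n x] (mod int p)"
proof -
  let ?f = "x^2 + x + 1" and ?g = "x * (x - 1) * (x^3 - 1)"
  have Suc3: "3 * n + 3 = Suc (3 * n + 2)"
    by simp
  have fermat: "[a ^ (3 * n + 3) = 1] (mod int p)" if "\<not> int p dvd a" for a
    using fermat_theorem_int[OF assms(1) that] p by (simp add: add.commute)
  have "x^3 - 1 = (x - 1) * ?f"
    by (simp add: algebra_simps power2_eq_square power3_eq_cube)
  then have nx: "\<not> int p dvd x" and nf: "\<not> int p dvd ?f"
    using ndvd by (metis dvd_mult dvd_mult2)+
  have "coprime ?g (int p)"
    using ndvd assms(1) prime_imp_coprime[of "int p" ?g] by (simp add: coprime_commute)
  moreover have "[?g * (rhs3 n x * ?f) = ?g * 3] (mod int p)"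
    using rhs3_mult_cong[of x n] fermat[OF nx] p by simp
  ultimately have inverse: "[rhs3 n x * ?f = 3] (mod int p)"
    by (simp only: cong_mult_lcancel)
  have "[rhs3 n x = rhs3 n x * ?f ^ (3 * n + 3)] (mod int p)"
    using cong_mult[OF cong_refl cong_sym[OF fermat[OF nf]], of "rhs3 n x"] by simp
  also have "rhs3 n x * ?f ^ (3 * n + 3) = (rhs3 n x * ?f) * ?f ^ (3 * n + 2)"
    unfolding Suc3 power_Suc by (simp only: mult_ac)
  also have "[(rhs3 n x * ?f) * ?f ^ (3 * n + 2) = 3 * ?f ^ (3 * n + 2)] (mod int p)"
    using inverse by (intro cong_mult cong_refl)
  finally show ?thesis
    by (rule cong_sym)
qed

lemma three_mult_pow_cong_rhs3:
  assumes "prime p" and "p = 3 * n + 4"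
  shows "[3 * (x^2 + x + 1) ^ (3 * n + 2) = rhs3 n x] (mod int p)"
proof -
  have "prime (int p)" using assms(1) by simp
  moreover have "x - 1 dvd x^3 - 1"
    using dvd_triv_left[of "x - 1" "x^2 + x + 1"]
    by (simp add: algebra_simps power2_eq_square power3_eq_cube)
  ultimately consider "int p dvd x" | "[x^3 = 1] (mod int p)" | "\<not> int p dvd x * (x - 1) * (x^3 - 1)"
    unfolding cong_iff_dvd_diff by (metis dvd_trans prime_dvd_mult_iff)
  then show ?thesis
    using three_mult_pow_cong_rhs3_of_dvd three_mult_pow_cong_rhs3_of_cube_root[OF assms]
      three_mult_pow_cong_rhs3_of_coprime[OF assms] by cases
qed

lemma three_mult_rhs_cong_rhs3:
  assumes "[3 * t = 1] (mod q)"
  shows "[3 * (1 + 2 * t * x ^ (3 * n + 3) - t * x ^ (3 * n + 2)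
            + (\<Sum>k = 2..3 * n + 2. (int k * Legendre (int k) 3 + of_bool (3 dvd (int k - 1)) - t)
                                    * x ^ (k - 1)))
          = rhs3 n x] (mod q)"
    (is "[3 * ?R = _] (mod _)")
proof -
  let ?c = "\<lambda>k. int k * Legendre (int k) 3 + of_bool (3 dvd (int k - 1))"
  have expand: "3 * ?R = 3 + 3 * t * (2 * x ^ (3 * n + 3) - x ^ (3 * n + 2))
          + (\<Sum>k = 2..3 * n + 2. (3 * ?c k - 3 * t) * x ^ (k - 1))"
    by (simp add: sum_distrib_left algebra_simps)
  have "[3 + 3 * t * (2 * x ^ (3 * n + 3) - x ^ (3 * n + 2))
          + (\<Sum>k = 2..3 * n + 2. (3 * ?c k - 3 * t) * x ^ (k - 1))
       = 3 + 1 * (2 * x ^ (3 * n + 3) - x ^ (3 * n + 2))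
          + (\<Sum>k = 2..3 * n + 2. (3 * ?c k - 1) * x ^ (k - 1))] (mod q)"
    using assms by (intro cong_add cong_mult cong_diff cong_sum cong_refl)
  moreover have "3 + 1 * (2 * x ^ (3 * n + 3) - x ^ (3 * n + 2))
          + (\<Sum>k = 2..3 * n + 2. (3 * ?c k - 1) * x ^ (k - 1)) = rhs3 n x"
    by (simp add: rhs3_def coeff_sum3_def coeff3_def)
  ultimately show ?thesis
    unfolding expand by (simp only:)
qed

theorem corollary2p1:
  fixes p :: nat and x t :: int
  assumes "prime p" and "[p = 1] (mod 3)"
    and "[3 * t = 1] (mod int p)"
  shows "[(x^2 + x + 1) ^ (p - 2)
          = 1 + 2 * t * x ^ (p - 1) - t * x ^ (p - 2)
            + (\<Sum>k = 2..p - 2. (int k * Legendre (int k) 3 + of_bool (3 dvd (int k - 1)) - t)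
                                 * x ^ (k - 1))] (mod int p)"
proof -
  have "p mod 3 = 1"
    using assms(2) by (simp add: cong_def)
  moreover have "p \<noteq> 1"
    using assms(1) by auto
  ultimately have "\<exists>n. p = 3 * n + 4"
    by presburger
  then obtain n where p: "p = 3 * n + 4" ..
  have e: "p - 1 = 3 * n + 3" "p - 2 = 3 * n + 2"
    using p by simp_all
  have "\<not> int p dvd 3"
    using p by (auto dest: zdvd_imp_le)
  then have "coprime 3 (int p)"
    using assms(1) prime_imp_coprime[of "int p" 3] by (simp add: coprime_commute)
  moreover have "[3 * (x^2 + x + 1) ^ (p - 2) = 3 * (1 + 2 * t * x ^ (p - 1) - t * x ^ (p - 2)
            + (\<Sum>k = 2..p - 2. (int k * Legendre (int k) 3 + of_bool (3 dvd (int k - 1)) - t)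
                                 * x ^ (k - 1)))] (mod int p)"
    unfolding e
    using three_mult_pow_cong_rhs3[OF assms(1) p] three_mult_rhs_cong_rhs3[OF assms(3), of x n]
    by (rule cong_trans[OF _ cong_sym])
  ultimately show ?thesis
    by (simp only: cong_mult_lcancel)
qed

end
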